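(* Let $0<\Delta\le1/10$ and $n\ge1$. Let $\alpha_{i,j}\in[-\Delta,0]$ and $\gamma_{i,j}\in[0,\Delta]$ for $1\le i,j\le n$. Consider the $(n+1)\times(n+1)$ bimatrix game with matrices $R,C$ given by: $R_{i,j}=1+\alpha_{i,j}$, $C_{i,j}=\gamma_{i,j}$ for $1\le i,j\le n$; $R_{i,n+1}=0$, $C_{i,n+1}=1$ for $1\le i\le n$; $R_{n+1,j}=0$, $C_{n+1,j}=2\Delta$ for $1\le j\le n$; and $R_{n+1,n+1}=2\Delta$, $C_{n+1,n+1}=0$. Then this game satisfies the strong $(\Delta^2,4\Delta)$-approximation stability condition. Moreover, every $\Delta^2$-equilibrium $(p,q)$ of this game satisfies $\Delta/2\le p_1+\dots+p_n\le4\Delta$ and $\Delta/2\le q_1+\dots+q_n\le4\Delta$.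
   Context: Mixed strategies $p,q$ are probability vectors in $\mathbb{R}^{n+1}$, payoffs $p^TRq$ and $p^TCq$, $e_i$ the $i$-th unit vector. $(p,q)$ is a Nash equilibrium if $e_i^TRq\le p^TRq$ and $p^TCe_j\le p^TCq$ for all $i,j$; an $\epsilon$-equilibrium if $e_i^TRq\le p^TRq+\epsilon$ and $p^TCe_j\le p^TCq+\epsilon$ for all $i,j$. Distance $d(p,p')=\frac12\sum_i|p_i-p'_i|$, $d((p,q),(p',q'))=\max(d(p,p'),d(q,q'))$; $\Delta$-close means distance $\le\Delta$. A game satisfies the strong $(\epsilon,\Delta)$-approximation stability condition if there is a Nash equilibrium $(p^*,q^* )$ of the game such that every $\epsilon$-equilibrium is $\Delta$-close to $(p^*,q^* )$. *)

theory Defs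
  imports "HOL-Analysis.Analysis"
begin

(* Strategies of an (m x m) bimatrix game are vectors indexed by {..<m}
   (i.e. 0-based; index k corresponds to the paper's index k+1). *)

definition prob_vec :: "nat \<Rightarrow> (nat \<Rightarrow> real) \<Rightarrow> bool" where
  "prob_vec m p \<longleftrightarrow> (\<forall>i<m. p i \<ge> 0) \<and> (\<Sum>i<m. p i) = 1"

definition unit_vec :: "nat \<Rightarrow> nat \<Rightarrow> real" where
  "unit_vec i = (\<lambda>k. if k = i then 1 else 0)"

definition payoff :: "nat \<Rightarrow> (nat \<Rightarrow> real) \<Rightarrow> (nat \<Rightarrow> nat \<Rightarrow> real) \<Rightarrow> (nat \<Rightarrow> real) \<Rightarrow> real" where
  "payoff m p A q = (\<Sum>i<m. \<Sum>j<m. p i * A i j * q j)"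

definition eps_equilibrium :: "nat \<Rightarrow> (nat \<Rightarrow> nat \<Rightarrow> real) \<Rightarrow> (nat \<Rightarrow> nat \<Rightarrow> real) \<Rightarrow> real
    \<Rightarrow> (nat \<Rightarrow> real) \<Rightarrow> (nat \<Rightarrow> real) \<Rightarrow> bool" where
  "eps_equilibrium m R C \<epsilon> p q \<longleftrightarrow> prob_vec m p \<and> prob_vec m q \<and>
     (\<forall>i<m. payoff m (unit_vec i) R q \<le> payoff m p R q + \<epsilon>) \<and>
     (\<forall>j<m. payoff m p C (unit_vec j) \<le> payoff m p C q + \<epsilon>)"

definition nash_equilibrium :: "nat \<Rightarrow> (nat \<Rightarrow> nat \<Rightarrow> real) \<Rightarrow> (nat \<Rightarrow> nat \<Rightarrow> real)
    \<Rightarrow> (nat \<Rightarrow> real) \<Rightarrow> (nat \<Rightarrow> real) \<Rightarrow> bool" where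
  "nash_equilibrium m R C p q \<longleftrightarrow> prob_vec m p \<and> prob_vec m q \<and>
     (\<forall>i<m. payoff m (unit_vec i) R q \<le> payoff m p R q) \<and>
     (\<forall>j<m. payoff m p C (unit_vec j) \<le> payoff m p C q)"

definition strat_dist :: "nat \<Rightarrow> (nat \<Rightarrow> real) \<Rightarrow> (nat \<Rightarrow> real) \<Rightarrow> real" where
  "strat_dist m p p' = (1/2) * (\<Sum>i<m. \<bar>p i - p' i\<bar>)"

definition profile_dist :: "nat \<Rightarrow> (nat \<Rightarrow> real) \<times> (nat \<Rightarrow> real) \<Rightarrow> (nat \<Rightarrow> real) \<times> (nat \<Rightarrow> real) \<Rightarrow> real" where
  "profile_dist m pq pq' = max (strat_dist m (fst pq) (fst pq')) (strat_dist m (snd pq) (snd pq'))"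

definition strong_approx_stable :: "nat \<Rightarrow> (nat \<Rightarrow> nat \<Rightarrow> real) \<Rightarrow> (nat \<Rightarrow> nat \<Rightarrow> real)
    \<Rightarrow> real \<Rightarrow> real \<Rightarrow> bool" where
  "strong_approx_stable m R C \<epsilon> \<Delta> \<longleftrightarrow>
     (\<exists>ps qs. nash_equilibrium m R C ps qs \<and>
        (\<forall>p q. eps_equilibrium m R C \<epsilon> p q \<longrightarrow> profile_dist m (p, q) (ps, qs) \<le> \<Delta>))"

end

theory Submission
  imports Defs
begin

(* Comparing, in a \<Delta>\<^sup>2-equilibrium, the payoffs of the deviations to the first and to the last
   pure strategy of each player with upper bounds for the equilibrium payoffs yields four
   polynomial inequalities in the masses P and Q that the two players put on the first n
   strategies; for \<Delta> \<le> 1/10 they confine both masses to [\<Delta>/2, 4\<Delta>].  Two mixed strategies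
   that both put mass at most 4\<Delta> on the first n strategies are 4\<Delta>-close, so any Nash
   equilibrium serves as the reference equilibrium.

   Nash equilibria exist by Nash's argument: a fixed point of his improvement map is an
   equilibrium.  As the number of strategies is a variable here, rather than a type, Brouwer's
   theorem is derived for the cube [0,1]^N directly from Kuhn's combinatorial lemma instead of
   being taken from the type-indexed library version. *)

section \<open>Brouwer's fixed point theorem for the cube\<close>

lemma bounded_coords_convergent_subseq:
  fixes x :: "nat \<Rightarrow> nat \<Rightarrow> real"
  assumes "\<And>k i. i < N \<Longrightarrow> \<bar>x k i\<bar> \<le> B"
  obtains \<sigma> z where "strict_mono \<sigma>" and "\<And>i. i < N \<Longrightarrow> (\<lambda>k. x (\<sigma> k) i) \<longlonglongrightarrow> z i"
proof -
  have "\<exists>\<sigma> z. strict_mono \<sigma> \<and> (\<forall>i<N. (\<lambda>k. x (\<sigma> k) i) \<longlonglongrightarrow> z i)"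
    using assms
  proof (induction N)
    case 0
    show ?case by (rule exI[of _ id]) (auto simp: strict_mono_def)
  next
    case (Suc N)
    then obtain \<sigma> z where \<sigma>: "strict_mono \<sigma>" and z: "\<forall>i<N. (\<lambda>k. x (\<sigma> k) i) \<longlonglongrightarrow> z i"
      by (metis less_SucI)
    have "bounded (range (\<lambda>k. x (\<sigma> k) N))"
      unfolding bounded_real using Suc.prems by blast
    then obtain l r where r: "strict_mono r" "((\<lambda>k. x (\<sigma> k) N) \<circ> r) \<longlonglongrightarrow> l"
      using bounded_imp_convergent_subsequence by blast
    have "(\<lambda>k. x ((\<sigma> \<circ> r) k) i) \<longlonglongrightarrow> (z(N := l)) i" if "i < Suc N" for i
    proof (cases "i = N")
      case False
      then have "i < N" using that by simp
      from LIMSEQ_subseq_LIMSEQ[OF z[rule_format, OF this] r(1)] False show ?thesis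
        by (simp add: o_def)
    qed (use r(2) in \<open>simp add: o_def\<close>)
    moreover have "strict_mono (\<sigma> \<circ> r)"
      using \<sigma> r(1) by (rule strict_mono_o)
    ultimately show ?case by blast
  qed
  with that show thesis by blast
qed

definition unit_cube :: "nat \<Rightarrow> (nat \<Rightarrow> real) set" where
  "unit_cube N = {x. \<forall>i<N. 0 \<le> x i \<and> x i \<le> 1}"

definition seq_continuous_on_cube :: "nat \<Rightarrow> ((nat \<Rightarrow> real) \<Rightarrow> nat \<Rightarrow> real) \<Rightarrow> bool" where
  "seq_continuous_on_cube N f \<longleftrightarrow> (\<forall>xs z. (\<forall>k. xs k \<in> unit_cube N) \<longrightarrow> z \<in> unit_cube N \<longrightarrow>
      (\<forall>i<N. (\<lambda>k. xs k i) \<longlonglongrightarrow> z i) \<longrightarrow> (\<forall>i<N. (\<lambda>k. f (xs k) i) \<longlonglongrightarrow> f z i))"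

lemma unit_cube_limit:
  assumes "\<And>k. xs k \<in> unit_cube N" and "\<And>i. i < N \<Longrightarrow> (\<lambda>k. xs k i) \<longlonglongrightarrow> z i"
  shows "z \<in> unit_cube N"
  unfolding unit_cube_def
proof (intro CollectI allI impI conjI)
  fix i assume i: "i < N"
  show "0 \<le> z i"
    by (rule LIMSEQ_le_const[OF assms(2)[OF i]]) (use assms(1) i in \<open>simp add: unit_cube_def\<close>)
  show "z i \<le> 1"
    by (rule LIMSEQ_le_const2[OF assms(2)[OF i]]) (use assms(1) i in \<open>simp add: unit_cube_def\<close>)
qed

definition grid_point :: "nat \<Rightarrow> (nat \<Rightarrow> nat) \<Rightarrow> nat \<Rightarrow> real" where
  "grid_point p r = (\<lambda>j. real (r j) / real p)"

lemma grid_cell_vertex: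
  fixes p :: nat and q r :: "nat \<Rightarrow> nat"
  assumes p: "0 < p" and q: "\<forall>j<N. q j < p" and r: "\<forall>j<N. q j \<le> r j \<and> r j \<le> q j + 1"
  shows "grid_point p r \<in> unit_cube N"
    and "\<forall>j<N. \<bar>grid_point p r j - grid_point p q j\<bar> \<le> 1 / p"
proof -
  have "r j \<le> p" if "j < N" for j
  proof -
    have "r j \<le> q j + 1" "q j < p" using r q that by auto
    then show ?thesis by linarith
  qed
  with p show "grid_point p r \<in> unit_cube N"
    by (simp add: unit_cube_def grid_point_def)
  show "\<forall>j<N. \<bar>grid_point p r j - grid_point p q j\<bar> \<le> 1 / p"
  proof (intro allI impI)
    fix j assume "j < N"
    then have "real (q j) \<le> real (r j)" "real (r j) \<le> real (q j) + 1"
      using r by auto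
    with p show "\<bar>grid_point p r j - grid_point p q j\<bar> \<le> 1 / p"
      by (simp add: grid_point_def abs_le_iff diff_divide_distrib[symmetric] divide_right_mono)
  qed
qed

text \<open>Kuhn's lemma is applied to the labelling of grid points by the sign of \<open>f x i - x i\<close>; the
  label of the face \<open>x i = 1\<close> is forced to \<open>1\<close>, as Kuhn's lemma requires.\<close>

lemma kuhn_grid_cell:
  fixes f :: "(nat \<Rightarrow> real) \<Rightarrow> nat \<Rightarrow> real" and p :: nat
  assumes f: "\<forall>x\<in>unit_cube N. f x \<in> unit_cube N" and p: "0 < p"
  obtains q where "\<forall>i<N. q i < p"
    and "\<forall>i<N. \<exists>r s. (\<forall>j<N. q j \<le> r j \<and> r j \<le> q j + 1) \<and>
           (\<forall>j<N. q j \<le> s j \<and> s j \<le> q j + 1) \<and>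
           f (grid_point p r) i \<le> grid_point p r i \<and> grid_point p s i \<le> f (grid_point p s) i"
proof -
  define label where "label r i =
    (if grid_point p r i = 1 then 1 else if grid_point p r i \<le> f (grid_point p r) i then 0 else 1::nat)"
    for r i
  have grid_cube: "grid_point p r \<in> unit_cube N" if "\<forall>j<N. r j \<le> p" for r
    using that p by (auto simp: grid_point_def unit_cube_def)
  have labels: "\<forall>r. (\<forall>j<N. r j \<le> p) \<longrightarrow> (\<forall>i<N. label r i = 0 \<or> label r i = 1)"
    by (simp add: label_def)
  have label_lower: "\<forall>r. (\<forall>j<N. r j \<le> p) \<longrightarrow> (\<forall>i<N. r i = 0 \<longrightarrow> label r i = 0)"
  proof (intro allI impI)
    fix r i assume r: "\<forall>j<N. r j \<le> p" and i: "i < N" and "r i = 0"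
    then have "grid_point p r i = 0" by (simp add: grid_point_def)
    moreover have "0 \<le> f (grid_point p r) i"
      using f grid_cube[OF r] i by (simp add: unit_cube_def)
    ultimately show "label r i = 0" by (simp add: label_def)
  qed
  have label_upper: "\<forall>r. (\<forall>j<N. r j \<le> p) \<longrightarrow> (\<forall>i<N. r i = p \<longrightarrow> label r i = 1)"
    using p by (simp add: label_def grid_point_def)
  obtain q where q: "\<forall>i<N. q i < p"
    and cell: "\<forall>i<N. \<exists>r s. (\<forall>j<N. q j \<le> r j \<and> r j \<le> q j + 1) \<and>
                 (\<forall>j<N. q j \<le> s j \<and> s j \<le> q j + 1) \<and> label r i \<noteq> label s i"
    by (rule kuhn_lemma[OF p labels label_lower label_upper])
  have signs: "f (grid_point p r) i \<le> grid_point p r i \<and> grid_point p s i \<le> f (grid_point p s) i"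
    if i: "i < N" and "\<forall>j<N. q j \<le> r j \<and> r j \<le> q j + 1" and lab: "label r i = 1" "label s i = 0"
    for i r s
  proof -
    have "grid_point p r \<in> unit_cube N"
      using grid_cell_vertex(1)[OF p q that(2)] by (simp add: grid_point_def)
    then show ?thesis
      using f i lab by (auto simp: label_def unit_cube_def split: if_splits)
  qed
  show thesis
  proof (rule that[OF q], intro allI impI)
    fix i assume i: "i < N"
    then obtain r s where r: "\<forall>j<N. q j \<le> r j \<and> r j \<le> q j + 1"
      and s: "\<forall>j<N. q j \<le> s j \<and> s j \<le> q j + 1" and "label r i \<noteq> label s i"
      using cell by blast
    moreover have "label r i \<in> {0, 1}" "label s i \<in> {0, 1}"
      by (simp_all add: label_def)
    ultimately consider "label r i = 1" "label s i = 0" | "label s i = 1" "label r i = 0"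
      by auto
    then show "\<exists>r s. (\<forall>j<N. q j \<le> r j \<and> r j \<le> q j + 1) \<and>
        (\<forall>j<N. q j \<le> s j \<and> s j \<le> q j + 1) \<and>
        f (grid_point p r) i \<le> grid_point p r i \<and> grid_point p s i \<le> f (grid_point p s) i"
    proof cases
      case 1
      then show ?thesis
        using signs[OF i r] r s by (intro exI[of _ r] exI[of _ s]) simp
    next
      case 2
      then show ?thesis
        using signs[OF i s] r s by (intro exI[of _ s] exI[of _ r]) simp
    qed
  qed
qed

lemma unit_cube_approx_fixpoint:
  fixes f :: "(nat \<Rightarrow> real) \<Rightarrow> nat \<Rightarrow> real" and p :: nat
  assumes f: "\<forall>x\<in>unit_cube N. f x \<in> unit_cube N" and p: "0 < p"
  shows "\<exists>c a b. c \<in> unit_cube N \<and>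
           (\<forall>i<N. a i \<in> unit_cube N \<and> b i \<in> unit_cube N \<and>
              (\<forall>j<N. \<bar>a i j - c j\<bar> \<le> 1 / p \<and> \<bar>b i j - c j\<bar> \<le> 1 / p) \<and>
              f (a i) i \<le> a i i \<and> b i i \<le> f (b i) i)"
proof -
  obtain q where q: "\<forall>i<N. q i < p"
    and cell: "\<forall>i<N. \<exists>r s. (\<forall>j<N. q j \<le> r j \<and> r j \<le> q j + 1) \<and>
        (\<forall>j<N. q j \<le> s j \<and> s j \<le> q j + 1) \<and>
        f (grid_point p r) i \<le> grid_point p r i \<and> grid_point p s i \<le> f (grid_point p s) i"
    by (rule kuhn_grid_cell[OF f p])
  have "grid_point p q \<in> unit_cube N"
    using grid_cell_vertex(1)[OF p q, of q] by simp
  moreover have "\<forall>i<N. \<exists>a b. a \<in> unit_cube N \<and> b \<in> unit_cube N \<and>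
      (\<forall>j<N. \<bar>a j - grid_point p q j\<bar> \<le> 1 / p \<and> \<bar>b j - grid_point p q j\<bar> \<le> 1 / p) \<and>
      f a i \<le> a i \<and> b i \<le> f b i"
  proof (intro allI impI)
    fix i assume "i < N"
    then obtain r s where r: "\<forall>j<N. q j \<le> r j \<and> r j \<le> q j + 1"
      and s: "\<forall>j<N. q j \<le> s j \<and> s j \<le> q j + 1"
      and signs: "f (grid_point p r) i \<le> grid_point p r i" "grid_point p s i \<le> f (grid_point p s) i"
      using cell by blast
    show "\<exists>a b. a \<in> unit_cube N \<and> b \<in> unit_cube N \<and>
      (\<forall>j<N. \<bar>a j - grid_point p q j\<bar> \<le> 1 / p \<and> \<bar>b j - grid_point p q j\<bar> \<le> 1 / p) \<and>
      f a i \<le> a i \<and> b i \<le> f b i"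
      using grid_cell_vertex[OF p q r] grid_cell_vertex[OF p q s] signs by blast
  qed
  ultimately show ?thesis
    by (simp only: choice_iff') blast
qed

lemma brouwer_unit_cube:
  assumes f: "\<forall>x\<in>unit_cube N. f x \<in> unit_cube N" and cont: "seq_continuous_on_cube N f"
  obtains z where "z \<in> unit_cube N" and "\<And>i. i < N \<Longrightarrow> f z i = z i"
proof -
  have "\<forall>k. \<exists>c a b. c \<in> unit_cube N \<and>
           (\<forall>i<N. a i \<in> unit_cube N \<and> b i \<in> unit_cube N \<and>
              (\<forall>j<N. \<bar>a i j - c j\<bar> \<le> 1 / Suc k \<and> \<bar>b i j - c j\<bar> \<le> 1 / Suc k) \<and>
              f (a i) i \<le> a i i \<and> b i i \<le> f (b i) i)"
    using unit_cube_approx_fixpoint[OF f zero_less_Suc] by blast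
  then obtain c A B where c: "\<And>k. c k \<in> unit_cube N"
    and AB: "\<And>k i. i < N \<Longrightarrow> A k i \<in> unit_cube N \<and> B k i \<in> unit_cube N \<and>
              (\<forall>j<N. \<bar>A k i j - c k j\<bar> \<le> 1 / Suc k \<and> \<bar>B k i j - c k j\<bar> \<le> 1 / Suc k) \<and>
              f (A k i) i \<le> A k i i \<and> B k i i \<le> f (B k i) i"
    by (simp only: choice_iff) blast
  have "\<bar>c k j\<bar> \<le> 1" if "j < N" for k j
    using c[of k] that by (simp add: unit_cube_def)
  then obtain \<sigma> z where \<sigma>: "strict_mono \<sigma>" and cz: "\<And>j. j < N \<Longrightarrow> (\<lambda>k. c (\<sigma> k) j) \<longlonglongrightarrow> z j"
    using bounded_coords_convergent_subseq[of N c 1] by blast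
  have z: "z \<in> unit_cube N"
    using c cz by (rule unit_cube_limit)
  have mesh: "(\<lambda>k. 1 / real (Suc (\<sigma> k))) \<longlonglongrightarrow> 0"
    using LIMSEQ_subseq_LIMSEQ[OF LIMSEQ_inverse_real_of_nat \<sigma>]
    by (simp add: o_def inverse_eq_divide)
  have limit: "(\<lambda>k. a k j) \<longlonglongrightarrow> z j"
    if "\<And>k. \<bar>a k j - c (\<sigma> k) j\<bar> \<le> 1 / Suc (\<sigma> k)" "j < N" for a j
  proof -
    have "(\<lambda>k. a k j - c (\<sigma> k) j) \<longlonglongrightarrow> 0"
      using that(1) by (intro Lim_null_comparison[OF _ mesh] always_eventually) simp
    from tendsto_add[OF this cz[OF \<open>j < N\<close>]] show ?thesis by simp
  qed
  show thesis
  proof (rule that[OF z])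
    fix i assume i: "i < N"
    define a where "a k = A (\<sigma> k) i" for k
    define b where "b k = B (\<sigma> k) i" for k
    have a: "a k \<in> unit_cube N" "f (a k) i \<le> a k i"
      and b: "b k \<in> unit_cube N" "b k i \<le> f (b k) i" for k
      using AB[OF i, of "\<sigma> k"] by (simp_all add: a_def b_def)
    have a_lim: "(\<lambda>k. a k j) \<longlonglongrightarrow> z j" and b_lim: "(\<lambda>k. b k j) \<longlonglongrightarrow> z j" if "j < N" for j
      using AB[OF i] that by (auto simp: a_def b_def intro!: limit)
    have "(\<lambda>k. f (a k) i) \<longlonglongrightarrow> f z i" "(\<lambda>k. f (b k) i) \<longlonglongrightarrow> f z i"
        using cont[unfolded seq_continuous_on_cube_def, rule_format, OF _ z _ i]
        a(1) b(1) a_lim b_lim by blast+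
    then have "f z i \<le> z i" "z i \<le> f z i"
      using LIMSEQ_le a(2) b(2) a_lim[OF i] b_lim[OF i] by blast+
    then show "f z i = z i" by simp
  qed
qed

section \<open>Bimatrix games\<close>

lemma payoff_unit_row:
  assumes "i < m"
  shows "payoff m (unit_vec i) A q = (\<Sum>j<m. A i j * q j)"
proof -
  have "payoff m (unit_vec i) A q = (\<Sum>i'<m. if i' = i then (\<Sum>j<m. A i' j * q j) else 0)"
    unfolding payoff_def unit_vec_def by (intro sum.cong) (simp_all add: sum_distrib_left)
  with assms show ?thesis by simp
qed

lemma payoff_unit_col:
  assumes "j < m"
  shows "payoff m p A (unit_vec j) = (\<Sum>i<m. p i * A i j)"
proof -
  have "payoff m p A (unit_vec j) = (\<Sum>i<m. \<Sum>j'<m. if j' = j then p i * A i j' else 0)"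
    unfolding payoff_def unit_vec_def by (intro sum.cong) simp_all
  with assms show ?thesis by simp
qed

lemma payoff_by_rows: "payoff m p A q = (\<Sum>i<m. p i * payoff m (unit_vec i) A q)"
proof -
  have "(\<Sum>i<m. p i * payoff m (unit_vec i) A q) = (\<Sum>i<m. p i * (\<Sum>j<m. A i j * q j))"
    by (intro sum.cong) (simp_all add: payoff_unit_row)
  then show ?thesis
    by (simp add: payoff_def sum_distrib_left mult.assoc)
qed

lemma payoff_by_cols: "payoff m p A q = (\<Sum>j<m. q j * payoff m p A (unit_vec j))"
proof -
  have "(\<Sum>j<m. q j * payoff m p A (unit_vec j)) = (\<Sum>j<m. q j * (\<Sum>i<m. p i * A i j))"
    by (intro sum.cong) (simp_all add: payoff_unit_col)
  also have "\<dots> = payoff m p A q"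
    unfolding payoff_def by (subst sum.swap) (simp add: sum_distrib_left mult_ac)
  finally show ?thesis ..
qed

lemma payoff_tendsto:
  assumes "\<And>j. j < m \<Longrightarrow> (\<lambda>k. p k j) \<longlonglongrightarrow> p' j" and "\<And>j. j < m \<Longrightarrow> (\<lambda>k. q k j) \<longlonglongrightarrow> q' j"
  shows "(\<lambda>k. payoff m (p k) A (q k)) \<longlonglongrightarrow> payoff m p' A q'"
  unfolding payoff_def by (intro tendsto_sum tendsto_mult tendsto_const assms) auto

lemma prob_vec_le_1:
  assumes "prob_vec m p" and "i < m"
  shows "p i \<le> 1"
proof -
  have "p i \<le> (\<Sum>j<m. p j)"
    by (rule member_le_sum) (use assms in \<open>auto simp: prob_vec_def\<close>)
  with assms show ?thesis by (simp add: prob_vec_def)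
qed

lemma prob_vec_cong: "prob_vec m p \<Longrightarrow> (\<And>i. i < m \<Longrightarrow> p' i = p i) \<Longrightarrow> prob_vec m p'"
  unfolding prob_vec_def by simp

lemma nash_imp_eps_equilibrium:
  "nash_equilibrium m R C p q \<Longrightarrow> 0 \<le> \<epsilon> \<Longrightarrow> eps_equilibrium m R C \<epsilon> p q"
  unfolding nash_equilibrium_def eps_equilibrium_def by (meson add_increasing2)

lemma prob_vec_last: "prob_vec (n + 1) p \<Longrightarrow> p n = 1 - (\<Sum>i<n. p i)"
  by (simp add: prob_vec_def)

lemma strat_dist_le_max_mass:
  assumes x: "prob_vec (n + 1) x" and y: "prob_vec (n + 1) y"
  shows "strat_dist (n + 1) x y \<le> max (\<Sum>i<n. x i) (\<Sum>i<n. y i)"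
proof -
  have "(\<Sum>i<n. \<bar>x i - y i\<bar>) \<le> (\<Sum>i<n. x i + y i)"
  proof (rule sum_mono)
    fix i assume "i \<in> {..<n}"
    then have "0 \<le> x i" "0 \<le> y i"
      using x y by (simp_all add: prob_vec_def)
    then show "\<bar>x i - y i\<bar> \<le> x i + y i"
      by linarith
  qed
  then have "(\<Sum>i<n. \<bar>x i - y i\<bar>) \<le> (\<Sum>i<n. x i) + (\<Sum>i<n. y i)"
    by (simp add: sum.distrib)
  then show ?thesis
    using prob_vec_last[OF x] prob_vec_last[OF y] by (simp add: strat_dist_def)
qed

lemma payoff_split_last_row:
  "payoff (n + 1) p A q =
     (\<Sum>i<n. p i * payoff (n + 1) (unit_vec i) A q) + p n * payoff (n + 1) (unit_vec n) A q"
  using payoff_by_rows[of "n + 1" p A q] by simp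

lemma payoff_split_last_col:
  "payoff (n + 1) p A q =
     (\<Sum>j<n. q j * payoff (n + 1) p A (unit_vec j)) + q n * payoff (n + 1) p A (unit_vec n)"
  using payoff_by_cols[of "n + 1" p A q] by simp

section \<open>Existence of Nash equilibria\<close>

definition simplex_retraction :: "nat \<Rightarrow> (nat \<Rightarrow> real) \<Rightarrow> nat \<Rightarrow> real" where
  "simplex_retraction m x =
     (\<lambda>i. (x i + max 0 (1 - (\<Sum>j<m. x j)) / m) / max 1 (\<Sum>j<m. x j))"

lemma prob_vec_simplex_retraction:
  assumes "1 \<le> m" and "\<And>i. i < m \<Longrightarrow> 0 \<le> x i"
  shows "prob_vec m (simplex_retraction m x)"
proof -
  define S where "S = (\<Sum>j<m. x j)"
  have "0 \<le> S"
    unfolding S_def by (rule sum_nonneg) (use assms(2) in simp)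
  have "(\<Sum>i<m. simplex_retraction m x i) = (S + max 0 (1 - S)) / max 1 S"
    using assms(1) by (simp add: simplex_retraction_def S_def sum_divide_distrib[symmetric] sum.distrib)
  also have "\<dots> = 1"
    by (simp add: max_def)
  finally show ?thesis
    using assms \<open>0 \<le> S\<close> by (auto simp: prob_vec_def simplex_retraction_def S_def)
qed

lemma simplex_retraction_id: "prob_vec m x \<Longrightarrow> simplex_retraction m x = x"
  by (simp add: prob_vec_def simplex_retraction_def)

lemma simplex_retraction_tendsto:
  assumes "1 \<le> m" and "\<And>j. j < m \<Longrightarrow> (\<lambda>k. x k j) \<longlonglongrightarrow> x' j" and "(\<lambda>k. x k i) \<longlonglongrightarrow> x' i"
  shows "(\<lambda>k. simplex_retraction m (x k) i) \<longlonglongrightarrow> simplex_retraction m x' i"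
proof -
  have "(\<lambda>k. \<Sum>j<m. x k j) \<longlonglongrightarrow> (\<Sum>j<m. x' j)"
    using assms(2) by (intro tendsto_sum) auto
  with assms show ?thesis
    unfolding simplex_retraction_def by (intro tendsto_intros) auto
qed

definition nash_excess :: "nat \<Rightarrow> (nat \<Rightarrow> real) \<Rightarrow> (nat \<Rightarrow> real) \<Rightarrow> nat \<Rightarrow> real" where
  "nash_excess m p u = (\<lambda>i. max 0 (u i - (\<Sum>k<m. p k * u k)))"

definition nash_update :: "nat \<Rightarrow> (nat \<Rightarrow> real) \<Rightarrow> (nat \<Rightarrow> real) \<Rightarrow> nat \<Rightarrow> real" where
  "nash_update m p u = (\<lambda>i. (p i + nash_excess m p u i) / (1 + (\<Sum>k<m. nash_excess m p u k)))"

lemma sum_nash_excess_nonneg: "0 \<le> (\<Sum>k<m. nash_excess m p u k)"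
  by (simp add: nash_excess_def sum_nonneg)

lemma prob_vec_nash_update:
  assumes "prob_vec m p"
  shows "prob_vec m (nash_update m p u)"
proof -
  define G where "G = (\<Sum>k<m. nash_excess m p u k)"
  have "0 \<le> G"
    unfolding G_def by (rule sum_nash_excess_nonneg)
  have "(\<Sum>i<m. nash_update m p u i) = ((\<Sum>i<m. p i) + G) / (1 + G)"
    by (simp add: nash_update_def G_def sum_divide_distrib[symmetric] sum.distrib)
  moreover have "0 \<le> nash_update m p u i" if "i < m" for i
    unfolding nash_update_def G_def[symmetric] using assms that \<open>0 \<le> G\<close>
    by (intro divide_nonneg_pos add_nonneg_nonneg) (auto simp: prob_vec_def nash_excess_def)
  ultimately show ?thesis
    using assms \<open>0 \<le> G\<close> by (simp add: prob_vec_def)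
qed

lemma nash_update_tendsto:
  assumes "\<And>j. j < m \<Longrightarrow> (\<lambda>k. p k j) \<longlonglongrightarrow> p' j" and "\<And>j. j < m \<Longrightarrow> (\<lambda>k. u k j) \<longlonglongrightarrow> u' j"
    and "i < m"
  shows "(\<lambda>k. nash_update m (p k) (u k) i) \<longlonglongrightarrow> nash_update m p' u' i"
proof -
  have avg: "(\<lambda>k. \<Sum>j<m. p k j * u k j) \<longlonglongrightarrow> (\<Sum>j<m. p' j * u' j)"
    using assms by (intro tendsto_intros) auto
  have excess: "(\<lambda>k. nash_excess m (p k) (u k) j) \<longlonglongrightarrow> nash_excess m p' u' j" if "j < m" for j
    unfolding nash_excess_def
    by (rule tendsto_max[OF tendsto_const tendsto_diff[OF assms(2)[OF that] avg]])
  have "1 + (\<Sum>k<m. nash_excess m p' u' k) \<noteq> 0"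
    using sum_nash_excess_nonneg[of m p' u'] by linarith
  with assms excess show ?thesis
    unfolding nash_update_def by (intro tendsto_intros) auto
qed

lemma prob_vec_support_le_average:
  assumes p: "prob_vec m p"
  obtains j where "j < m" and "0 < p j" and "u j \<le> (\<Sum>k<m. p k * u k)"
proof -
  define v where "v = (\<Sum>k<m. p k * u k)"
  have p0: "0 \<le> p k" if "k < m" for k
    using p that by (simp add: prob_vec_def)
  have "(\<Sum>k<m. p k) = 1"
    using p by (simp add: prob_vec_def)
  have "\<exists>j<m. 0 < p j \<and> u j \<le> v"
  proof (rule ccontr)
    assume "\<not> (\<exists>j<m. 0 < p j \<and> u j \<le> v)"
    then have above: "v < u k" if "k < m" "0 < p k" for k
      using that by (meson not_le)
    obtain k where k: "k < m" "0 < p k"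
      using p0 \<open>(\<Sum>k<m. p k) = 1\<close> by (metis lessThan_iff order_le_less sum.neutral zero_neq_one)
    have "0 < (\<Sum>k<m. p k * (u k - v))"
    proof (rule sum_pos2[of "{..<m}" k])
      show "0 \<le> p l * (u l - v)" if "l \<in> {..<m}" for l
        using p0[of l] above[of l] that by (cases "p l = 0") auto
    qed (use k above in auto)
    also have "\<dots> = v - (\<Sum>k<m. p k) * v"
      by (simp add: v_def right_diff_distrib sum_subtractf sum_distrib_right)
    finally show False
      using \<open>(\<Sum>k<m. p k) = 1\<close> by simp
  qed
  with that show thesis
    unfolding v_def by blast
qed

text \<open>Nash's argument: some strategy in the support does not beat the average, so its excess
  vanishes; at a fixed point this forces the total excess, hence every excess, to vanish.\<close>

lemma nash_update_fixpoint_imp_best: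
  assumes p: "prob_vec m p" and fixed: "\<And>i. i < m \<Longrightarrow> nash_update m p u i = p i" and "i < m"
  shows "u i \<le> (\<Sum>k<m. p k * u k)"
proof -
  define v where "v = (\<Sum>k<m. p k * u k)"
  define G where "G = (\<Sum>k<m. nash_excess m p u k)"
  have "0 \<le> G"
    unfolding G_def by (rule sum_nash_excess_nonneg)
  have scaled: "G * p j = nash_excess m p u j" if "j < m" for j
  proof -
    have "(p j + nash_excess m p u j) / (1 + G) = p j"
      using fixed[OF that] by (simp add: nash_update_def G_def)
    with \<open>0 \<le> G\<close> show ?thesis
      by (simp add: field_simps)
  qed
  obtain j where j: "j < m" "0 < p j" "u j \<le> v"
    using prob_vec_support_le_average[OF p] unfolding v_def by blast
  have "G = 0"
    using scaled[OF j(1)] j by (simp add: nash_excess_def v_def[symmetric])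
  then have "nash_excess m p u i = 0"
    using scaled[OF \<open>i < m\<close>] by simp
  then show ?thesis
    by (simp add: nash_excess_def v_def)
qed

text \<open>A point \<open>x\<close> of the \<open>2m\<close>-dimensional cube stands for the strategy pair formed by its
  first and its last \<open>m\<close> coordinates, each retracted onto the simplex.\<close>

definition row_strategy :: "nat \<Rightarrow> (nat \<Rightarrow> real) \<Rightarrow> nat \<Rightarrow> real" where
  "row_strategy m x = simplex_retraction m x"

definition col_strategy :: "nat \<Rightarrow> (nat \<Rightarrow> real) \<Rightarrow> nat \<Rightarrow> real" where
  "col_strategy m x = simplex_retraction m (\<lambda>j. x (m + j))"

definition nash_map :: "nat \<Rightarrow> (nat \<Rightarrow> nat \<Rightarrow> real) \<Rightarrow> (nat \<Rightarrow> nat \<Rightarrow> real) \<Rightarrow>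
    (nat \<Rightarrow> real) \<Rightarrow> nat \<Rightarrow> real" where
  "nash_map m R C x i =
     (if i < m
      then nash_update m (row_strategy m x) (\<lambda>k. payoff m (unit_vec k) R (col_strategy m x)) i
      else nash_update m (col_strategy m x) (\<lambda>k. payoff m (row_strategy m x) C (unit_vec k)) (i - m))"

lemma nash_map_unit_cube:
  assumes "1 \<le> m" and x: "x \<in> unit_cube (2 * m)"
  shows "nash_map m R C x \<in> unit_cube (2 * m)"
proof -
  have "prob_vec m (row_strategy m x)" "prob_vec m (col_strategy m x)"
    using assms unfolding row_strategy_def col_strategy_def unit_cube_def
    by (auto intro!: prob_vec_simplex_retraction)
  then have "prob_vec m (nash_update m (row_strategy m x) u)"
    and "prob_vec m (nash_update m (col_strategy m x) u)" for u
    by (simp_all add: prob_vec_nash_update)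
  moreover have "0 \<le> w i" "w i \<le> 1" if "prob_vec m w" "i < m" for w i
    using that prob_vec_le_1 by (auto simp: prob_vec_def)
  moreover have "i < m \<or> i - m < m" if "i < 2 * m" for i
    using that by linarith
  ultimately show ?thesis
    unfolding unit_cube_def nash_map_def by auto
qed

lemma seq_continuous_nash_map:
  assumes "1 \<le> m"
  shows "seq_continuous_on_cube (2 * m) (nash_map m R C)"
  unfolding seq_continuous_on_cube_def
proof (intro allI impI)
  fix xs :: "nat \<Rightarrow> nat \<Rightarrow> real" and z i
  assume lim: "\<forall>i<2 * m. (\<lambda>k. xs k i) \<longlonglongrightarrow> z i" and i: "i < 2 * m"
  have p: "(\<lambda>k. row_strategy m (xs k) j) \<longlonglongrightarrow> row_strategy m z j" if "j < m" for j
    unfolding row_strategy_def using assms lim that by (intro simplex_retraction_tendsto) auto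
  have q: "(\<lambda>k. col_strategy m (xs k) j) \<longlonglongrightarrow> col_strategy m z j" if "j < m" for j
    unfolding col_strategy_def using assms lim that by (intro simplex_retraction_tendsto) auto
  have "(\<lambda>k. payoff m (unit_vec j) R (col_strategy m (xs k))) \<longlonglongrightarrow>
        payoff m (unit_vec j) R (col_strategy m z)"
    and "(\<lambda>k. payoff m (row_strategy m (xs k)) C (unit_vec j)) \<longlonglongrightarrow>
        payoff m (row_strategy m z) C (unit_vec j)" for j
    using p q by (simp_all add: payoff_tendsto)
  with p q i show "(\<lambda>k. nash_map m R C (xs k) i) \<longlonglongrightarrow> nash_map m R C z i"
    unfolding nash_map_def by (auto intro!: nash_update_tendsto)
qed

theorem nash_equilibrium_exists:
  assumes "1 \<le> m"
  obtains p q where "nash_equilibrium m R C p q"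
proof -
  obtain x where "x \<in> unit_cube (2 * m)"
    and fixed: "\<And>i. i < 2 * m \<Longrightarrow> nash_map m R C x i = x i"
    using brouwer_unit_cube[OF _ seq_continuous_nash_map] nash_map_unit_cube assms by metis
  define p where "p = row_strategy m x"
  define q where "q = col_strategy m x"
  define u where "u = (\<lambda>k. payoff m (unit_vec k) R q)"
  define v where "v = (\<lambda>k. payoff m p C (unit_vec k))"
  have p_fixed: "nash_update m p u i = x i" if "i < m" for i
    using fixed[of i] that by (simp add: nash_map_def p_def q_def u_def)
  have q_fixed: "nash_update m q v j = x (m + j)" if "j < m" for j
    using fixed[of "m + j"] that by (simp add: nash_map_def p_def q_def v_def)
  have "prob_vec m p" "prob_vec m q"
    using \<open>x \<in> unit_cube (2 * m)\<close> assms
    unfolding p_def q_def row_strategy_def col_strategy_def unit_cube_def by (auto intro!: prob_vec_simplex_retraction)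
  then have "prob_vec m x" "prob_vec m (\<lambda>j. x (m + j))"
    by (metis prob_vec_cong prob_vec_nash_update p_fixed,
        metis prob_vec_cong prob_vec_nash_update q_fixed)
  then have "p = x" "q = (\<lambda>j. x (m + j))"
    by (simp_all add: p_def q_def row_strategy_def col_strategy_def simplex_retraction_id)
  then have "\<And>i. i < m \<Longrightarrow> nash_update m p u i = p i" "\<And>j. j < m \<Longrightarrow> nash_update m q v j = q j"
    using p_fixed q_fixed by simp_all
  with \<open>prob_vec m p\<close> \<open>prob_vec m q\<close> have "nash_equilibrium m R C p q"
    unfolding nash_equilibrium_def
    by (auto dest: nash_update_fixpoint_imp_best
        simp: u_def v_def payoff_by_rows[of m p R q] payoff_by_cols[of m p C q] mult.commute)
  then show thesis ..
qed

section \<open>The game of the theorem\<close>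

text \<open>Here \<open>P\<close> and \<open>Q\<close> are the masses that the two players put on the first \<open>n\<close> strategies.
  The hypotheses \<open>r0\<close>, \<open>rn\<close> (\<open>c0\<close>, \<open>cn\<close>) are the approximate-equilibrium conditions for a
  deviation of the row (column) player to the first resp. the last pure strategy, with the
  equilibrium payoffs replaced by the upper bounds \<open>P Q + 2 D (1 - P) (1 - Q)\<close> and
  \<open>Q (D P + 2 D (1 - P)) + (1 - Q) P\<close>.\<close>

lemma row_mass_le_if_col_mass_small:
  fixes D P Q :: real
  assumes D: "0 < D" "D \<le> 1/10" and "0 \<le> P" "Q \<le> D / 2"
    and rn: "2 * D * (1 - Q) \<le> P * Q + (1 - P) * (2 * D) * (1 - Q) + D^2"
  shows "P \<le> D"
proof -
  have "D * Q \<le> D * (D / 2)" and "D * D \<le> D * (1/10)"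
    using assms by (auto intro!: mult_left_mono)
  moreover have "2 * D * (1 - Q) - Q = 2 * D - 2 * (D * Q) - Q"
    by (simp add: algebra_simps)
  ultimately have "D \<le> 2 * D * (1 - Q) - Q"
    using assms by linarith
  then have "P * D \<le> P * (2 * D * (1 - Q) - Q)"
    using \<open>0 \<le> P\<close> by (rule mult_left_mono)
  also have "\<dots> \<le> D^2"
    using rn by (simp add: algebra_simps)
  finally show ?thesis
    using D by (simp add: power2_eq_square)
qed

lemma row_mass_upper:
  fixes D P Q :: real
  assumes D: "0 < D" "D \<le> 1/10" and P: "0 \<le> P" and Q: "0 \<le> Q"
    and rn: "2 * D * (1 - Q) \<le> P * Q + (1 - P) * (2 * D) * (1 - Q) + D^2"
    and cn: "P \<le> Q * (D * P + 2 * D * (1 - P)) + (1 - Q) * P + D^2"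
  shows "P < 4 * D"
proof (rule ccontr)
  assume "\<not> P < 4 * D"
  moreover have "0 \<le> P * D"
    using P D by simp
  moreover have "P * (1 + D) - 2 * D = P + P * D - 2 * D"
    by (simp add: algebra_simps)
  ultimately have "2 * D \<le> P * (1 + D) - 2 * D"
    by linarith
  then have "Q * (2 * D) \<le> Q * (P * (1 + D) - 2 * D)"
    using Q by (rule mult_left_mono)
  also have "\<dots> \<le> D^2"
    using cn by (simp add: algebra_simps)
  finally have "Q \<le> D / 2"
    using D by (simp add: power2_eq_square)
  then have "P \<le> D"
    using row_mass_le_if_col_mass_small D P rn by blast
  with \<open>\<not> P < 4 * D\<close> D show False
    by simp
qed

lemma row_mass_lower:
  fixes D P Q :: real
  assumes D: "0 < D" "D \<le> 1/10" and P: "0 \<le> P" "P \<le> 1" and Q: "0 \<le> Q" "Q \<le> 1"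
    and r0: "(1 - D) * Q \<le> P * Q + (1 - P) * (2 * D) * (1 - Q) + D^2"
    and c0: "2 * D * (1 - P) \<le> Q * (D * P + 2 * D * (1 - P)) + (1 - Q) * P + D^2"
  shows "D / 2 \<le> P"
proof (rule ccontr)
  assume "\<not> D / 2 \<le> P"
  have DP: "D * P \<le> D * (D / 2)" and DD: "D * D \<le> D * (1/10)"
    using D \<open>\<not> D / 2 \<le> P\<close> by (auto intro!: mult_left_mono)
  have QDP: "Q * (D * P) \<le> D * P"
    using D P Q by (simp add: mult_left_le_one_le)
  have "2 * D * (1 - P) - P = 2 * D - 2 * (D * P) - P"
    by (simp add: algebra_simps)
  then have "7/5 * D \<le> 2 * D * (1 - P) - P"
    using DP DD \<open>\<not> D / 2 \<le> P\<close> by linarith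
  then have "(1 - Q) * (7/5 * D) \<le> (1 - Q) * (2 * D * (1 - P) - P)"
    using Q by (intro mult_left_mono) auto
  also have "\<dots> \<le> Q * (D * P) + D * D"
    using c0 by (simp add: algebra_simps power2_eq_square)
  finally have "D * ((1 - Q) * (7/5)) \<le> D * (3/2 * D)"
    using DP QDP by (simp add: algebra_simps)
  then have "1 - Q \<le> 3/28"
    using D by (simp add: mult_le_cancel_left)
  have "P * Q \<le> P" "D * Q \<le> D"
    using P Q D by (simp_all add: mult_left_le)
  moreover have "(1 - P) * (2 * D * (1 - Q)) \<le> 2 * D * (1 - Q)"
    using P Q D by (intro mult_left_le_one_le) auto
  moreover have "2 * D * (1 - Q) \<le> 2 * D * (3/28)"
    using D \<open>1 - Q \<le> 3/28\<close> by (intro mult_left_mono) auto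
  moreover have "(1 - D) * Q = Q - D * Q"
    and "(1 - P) * (2 * D) * (1 - Q) = (1 - P) * (2 * D * (1 - Q))" by (simp_all add: algebra_simps)
  ultimately show False
    using r0 power2_eq_square[of D] \<open>\<not> D / 2 \<le> P\<close> \<open>1 - Q \<le> 3/28\<close> DD D by linarith
qed

lemma col_mass_upper:
  fixes D P Q :: real
  assumes D: "0 < D" "D \<le> 1/10" and P: "0 \<le> P" "P < 4 * D" and Q: "0 \<le> Q" "Q \<le> 1"
    and r0: "(1 - D) * Q \<le> P * Q + (1 - P) * (2 * D) * (1 - Q) + D^2"
  shows "Q < 4 * D"
proof (rule ccontr)
  assume "\<not> Q < 4 * D"
  have "0 \<le> D * P * (1 - Q)"
    using D P Q by simp
  moreover have "(1 - D) * Q - P * Q - (1 - P) * (2 * D) * (1 - Q) =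
      Q * (1 + D - P) - 2 * D + 2 * (D * P * (1 - Q))"
    by (simp add: algebra_simps)
  ultimately have "Q * (1 + D - P) \<le> 2 * D + D * D"
    using r0 power2_eq_square[of D] by linarith
  moreover have "4 * D * (1 - 3 * D) \<le> Q * (1 + D - P)"
    using \<open>\<not> Q < 4 * D\<close> D P by (intro mult_mono) auto
  moreover have "D * D \<le> D * (1/10)"
    using D by (intro mult_left_mono) auto
  moreover have "4 * D * (1 - 3 * D) = 4 * D - 12 * (D * D)"
    by (simp add: algebra_simps)
  ultimately show False
    using D by linarith
qed

lemma col_mass_lower:
  fixes D P Q :: real
  assumes D: "0 < D" "D \<le> 1/10" and P: "0 \<le> P" and Q: "0 \<le> Q" "Q \<le> 1"
    and rn: "2 * D * (1 - Q) \<le> P * Q + (1 - P) * (2 * D) * (1 - Q) + D^2"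
    and c0: "2 * D * (1 - P) \<le> Q * (D * P + 2 * D * (1 - P)) + (1 - Q) * P + D^2"
  shows "D / 2 \<le> Q"
proof (rule ccontr)
  assume "\<not> D / 2 \<le> Q"
  then have "P \<le> D"
    by (intro row_mass_le_if_col_mass_small[OF D P _ rn]) simp
  have DP: "D * P \<le> D * D" and DD: "D * D \<le> D * (1/10)" and DQ: "D * Q \<le> D * (D / 2)"
    using D \<open>P \<le> D\<close> \<open>\<not> D / 2 \<le> Q\<close> by (auto intro!: mult_left_mono)
  have QDP: "Q * (D * P) \<le> D * P"
    using D P Q by (simp add: mult_left_le_one_le)
  have "2 * D * (1 - P) - P = 2 * D - 2 * (D * P) - P"
    by (simp add: algebra_simps)
  then have "4/5 * D \<le> 2 * D * (1 - P) - P"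
    using DP DD \<open>P \<le> D\<close> by linarith
  then have "(1 - Q) * (4/5 * D) \<le> (1 - Q) * (2 * D * (1 - P) - P)"
    using Q by (intro mult_left_mono) auto
  also have "\<dots> \<le> Q * (D * P) + D * D"
    using c0 by (simp add: algebra_simps power2_eq_square)
  finally have "4/5 * D - 4/5 * (D * Q) \<le> Q * (D * P) + D * D"
    by (simp add: algebra_simps)
  with DP DD DQ QDP D show False
    by linarith
qed

locale stability_game =
  fixes n :: nat and \<Delta> :: real and \<alpha> \<gamma> R C :: "nat \<Rightarrow> nat \<Rightarrow> real"
  assumes \<Delta>_pos: "0 < \<Delta>" and \<Delta>_small: "\<Delta> \<le> 1/10" and n_pos: "n \<ge> 1"
    and \<alpha>: "\<And>i j. i < n \<Longrightarrow> j < n \<Longrightarrow> -\<Delta> \<le> \<alpha> i j \<and> \<alpha> i j \<le> 0"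
    and \<gamma>: "\<And>i j. i < n \<Longrightarrow> j < n \<Longrightarrow> 0 \<le> \<gamma> i j \<and> \<gamma> i j \<le> \<Delta>"
    and R_eq: "R = (\<lambda>i j. if i < n \<and> j < n then 1 + \<alpha> i j
                   else if i < n \<and> j = n then 0
                   else if i = n \<and> j < n then 0
                   else if i = n \<and> j = n then 2 * \<Delta> else 0)"
    and C_eq: "C = (\<lambda>i j. if i < n \<and> j < n then \<gamma> i j
                   else if i < n \<and> j = n then 1
                   else if i = n \<and> j < n then 2 * \<Delta>
                   else 0)"
begin

context
  fixes p q :: "nat \<Rightarrow> real" and P Q :: real
  assumes p: "prob_vec (n + 1) p" and q: "prob_vec (n + 1) q"
    and P_def: "P = (\<Sum>i<n. p i)" and Q_def: "Q = (\<Sum>j<n. q j)"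
begin

lemma p_nonneg: "i \<le> n \<Longrightarrow> 0 \<le> p i" and q_nonneg: "j \<le> n \<Longrightarrow> 0 \<le> q j"
  using p q by (simp_all add: prob_vec_def)

lemma row_payoff_bounds:
  assumes "i < n"
  shows "(1 - \<Delta>) * Q \<le> payoff (n + 1) (unit_vec i) R q"
    and "payoff (n + 1) (unit_vec i) R q \<le> Q"
proof -
  have "payoff (n + 1) (unit_vec i) R q = (\<Sum>j<n. (1 + \<alpha> i j) * q j)"
    using assms by (simp add: payoff_unit_row R_eq)
  moreover have "(\<Sum>j<n. (1 - \<Delta>) * q j) \<le> (\<Sum>j<n. (1 + \<alpha> i j) * q j)"
    using \<alpha>[OF assms] q_nonneg by (intro sum_mono mult_right_mono) auto
  moreover have "(\<Sum>j<n. (1 + \<alpha> i j) * q j) \<le> (\<Sum>j<n. q j)"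
    using \<alpha>[OF assms] q_nonneg
    by (intro sum_mono) (auto simp: distrib_right intro!: mult_nonpos_nonneg)
  ultimately show "(1 - \<Delta>) * Q \<le> payoff (n + 1) (unit_vec i) R q"
    "payoff (n + 1) (unit_vec i) R q \<le> Q" by (simp_all add: Q_def sum_distrib_left)
qed

lemma row_payoff_last: "payoff (n + 1) (unit_vec n) R q = 2 * \<Delta> * (1 - Q)"
  using prob_vec_last[OF q] by (simp add: payoff_unit_row R_eq Q_def)

lemma col_payoff_bounds:
  assumes "j < n"
  shows "2 * \<Delta> * (1 - P) \<le> payoff (n + 1) p C (unit_vec j)"
    and "payoff (n + 1) p C (unit_vec j) \<le> \<Delta> * P + 2 * \<Delta> * (1 - P)"
proof -
  have "payoff (n + 1) p C (unit_vec j) = (\<Sum>i<n. p i * \<gamma> i j) + 2 * \<Delta> * (1 - P)"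
    using assms prob_vec_last[OF p] by (simp add: payoff_unit_col C_eq P_def)
  moreover have "0 \<le> (\<Sum>i<n. p i * \<gamma> i j)" and "(\<Sum>i<n. p i * \<gamma> i j) \<le> (\<Sum>i<n. p i * \<Delta>)"
    using \<gamma>[OF _ assms] p_nonneg by (auto intro!: sum_nonneg sum_mono mult_left_mono)
  ultimately show "2 * \<Delta> * (1 - P) \<le> payoff (n + 1) p C (unit_vec j)"
    "payoff (n + 1) p C (unit_vec j) \<le> \<Delta> * P + 2 * \<Delta> * (1 - P)"
    by (simp_all add: P_def sum_distrib_left mult.commute)
qed

lemma col_payoff_last: "payoff (n + 1) p C (unit_vec n) = P"
  by (simp add: payoff_unit_col C_eq P_def)

lemma row_player_payoff_le: "payoff (n + 1) p R q \<le> P * Q + (1 - P) * (2 * \<Delta>) * (1 - Q)"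
proof -
  have "(\<Sum>i<n. p i * payoff (n + 1) (unit_vec i) R q) \<le> (\<Sum>i<n. p i * Q)"
    using row_payoff_bounds(2) p_nonneg by (intro sum_mono mult_left_mono) auto
  also have "\<dots> = P * Q"
    by (simp add: P_def sum_distrib_right)
  finally show ?thesis
    using payoff_split_last_row[of n p R q] row_payoff_last prob_vec_last[OF p]
    by (simp add: P_def)
qed

lemma col_player_payoff_le:
  "payoff (n + 1) p C q \<le> Q * (\<Delta> * P + 2 * \<Delta> * (1 - P)) + (1 - Q) * P"
proof -
  have "(\<Sum>j<n. q j * payoff (n + 1) p C (unit_vec j)) \<le>
      (\<Sum>j<n. q j * (\<Delta> * P + 2 * \<Delta> * (1 - P)))"
    using col_payoff_bounds(2) q_nonneg by (intro sum_mono mult_left_mono) auto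
  also have "\<dots> = Q * (\<Delta> * P + 2 * \<Delta> * (1 - P))"
    by (simp add: Q_def sum_distrib_right)
  finally show ?thesis
    using payoff_split_last_col[of n p C q] col_payoff_last prob_vec_last[OF q]
    by (simp add: Q_def mult.commute)
qed

end

theorem eps_equilibrium_masses:
  assumes "eps_equilibrium (n + 1) R C (\<Delta>^2) p q"
  shows "\<Delta> / 2 \<le> (\<Sum>i<n. p i) \<and> (\<Sum>i<n. p i) \<le> 4 * \<Delta> \<and>
         \<Delta> / 2 \<le> (\<Sum>j<n. q j) \<and> (\<Sum>j<n. q j) \<le> 4 * \<Delta>"
proof -
  define P where "P = (\<Sum>i<n. p i)"
  define Q where "Q = (\<Sum>j<n. q j)"
  have p: "prob_vec (n + 1) p" and q: "prob_vec (n + 1) q"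
    and row: "\<And>i. i < n + 1 \<Longrightarrow> payoff (n + 1) (unit_vec i) R q \<le> payoff (n + 1) p R q + \<Delta>^2"
    and col: "\<And>j. j < n + 1 \<Longrightarrow> payoff (n + 1) p C (unit_vec j) \<le> payoff (n + 1) p C q + \<Delta>^2"
    using assms unfolding eps_equilibrium_def by auto
  note facts = row_payoff_bounds[OF p q P_def Q_def] row_payoff_last[OF p q P_def Q_def]
    col_payoff_bounds[OF p q P_def Q_def] col_payoff_last[OF p q P_def Q_def]
    row_player_payoff_le[OF p q P_def Q_def] col_player_payoff_le[OF p q P_def Q_def]
  have "0 < n" using n_pos by simp
  have r0: "(1 - \<Delta>) * Q \<le> P * Q + (1 - P) * (2 * \<Delta>) * (1 - Q) + \<Delta>^2"
    using row[of 0] facts \<open>0 < n\<close> by fastforce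
  have rn: "2 * \<Delta> * (1 - Q) \<le> P * Q + (1 - P) * (2 * \<Delta>) * (1 - Q) + \<Delta>^2"
    using row[of n] facts by fastforce
  have c0: "2 * \<Delta> * (1 - P) \<le> Q * (\<Delta> * P + 2 * \<Delta> * (1 - P)) + (1 - Q) * P + \<Delta>^2"
    using col[of 0] facts \<open>0 < n\<close> by fastforce
  have cn: "P \<le> Q * (\<Delta> * P + 2 * \<Delta> * (1 - P)) + (1 - Q) * P + \<Delta>^2"
    using col[of n] facts by fastforce
  have P: "0 \<le> P" "P \<le> 1" and Q: "0 \<le> Q" "Q \<le> 1"
    using p q prob_vec_last[OF p] prob_vec_last[OF q]
    by (auto simp: P_def Q_def prob_vec_def intro: sum_nonneg)
  note \<Delta> = \<Delta>_pos \<Delta>_small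
  have "P < 4 * \<Delta>"
    by (rule row_mass_upper[OF \<Delta> P(1) Q(1) rn cn])
  moreover have "\<Delta> / 2 \<le> P"
    by (rule row_mass_lower[OF \<Delta> P Q r0 c0])
  moreover have "Q < 4 * \<Delta>"
    by (rule col_mass_upper[OF \<Delta> P(1) \<open>P < 4 * \<Delta>\<close> Q r0])
  moreover have "\<Delta> / 2 \<le> Q"
    by (rule col_mass_lower[OF \<Delta> P(1) Q rn c0])
  ultimately show ?thesis
    by (simp add: P_def Q_def)
qed

end

theorem lemma2:
  fixes n :: nat and \<Delta> :: real and \<alpha> \<gamma> :: "nat \<Rightarrow> nat \<Rightarrow> real"
    and R C :: "nat \<Rightarrow> nat \<Rightarrow> real"
  assumes "0 < \<Delta>" and "\<Delta> \<le> 1/10" and "n \<ge> 1"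
    and "\<And>i j. i < n \<Longrightarrow> j < n \<Longrightarrow> -\<Delta> \<le> \<alpha> i j \<and> \<alpha> i j \<le> 0"
    and "\<And>i j. i < n \<Longrightarrow> j < n \<Longrightarrow> 0 \<le> \<gamma> i j \<and> \<gamma> i j \<le> \<Delta>"
    and "R = (\<lambda>i j. if i < n \<and> j < n then 1 + \<alpha> i j
                   else if i < n \<and> j = n then 0
                   else if i = n \<and> j < n then 0
                   else if i = n \<and> j = n then 2 * \<Delta> else 0)"
    and "C = (\<lambda>i j. if i < n \<and> j < n then \<gamma> i j
                   else if i < n \<and> j = n then 1
                   else if i = n \<and> j < n then 2 * \<Delta>
                   else 0)"
  shows "strong_approx_stable (n + 1) R C (\<Delta>^2) (4 * \<Delta>) \<and>
         (\<forall>p q. eps_equilibrium (n + 1) R C (\<Delta>^2) p q \<longrightarrow>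
            \<Delta> / 2 \<le> (\<Sum>i<n. p i) \<and> (\<Sum>i<n. p i) \<le> 4 * \<Delta> \<and>
            \<Delta> / 2 \<le> (\<Sum>j<n. q j) \<and> (\<Sum>j<n. q j) \<le> 4 * \<Delta>)"
proof -
  interpret stability_game n \<Delta> \<alpha> \<gamma> R C
    using assms by unfold_locales
  obtain ps qs where nash: "nash_equilibrium (n + 1) R C ps qs"
    using nash_equilibrium_exists[of "n + 1" R C, OF le_add2] by blast
  then have "eps_equilibrium (n + 1) R C (\<Delta>^2) ps qs"
    by (simp add: nash_imp_eps_equilibrium)
  then have nash_masses: "(\<Sum>i<n. ps i) \<le> 4 * \<Delta>" "(\<Sum>j<n. qs j) \<le> 4 * \<Delta>"
    using eps_equilibrium_masses by blast+
  have "profile_dist (n + 1) (p, q) (ps, qs) \<le> 4 * \<Delta>"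
    if "eps_equilibrium (n + 1) R C (\<Delta>^2) p q" for p q
  proof -
    have "prob_vec (n + 1) p" "prob_vec (n + 1) q" "prob_vec (n + 1) ps" "prob_vec (n + 1) qs"
      using that nash by (simp_all add: eps_equilibrium_def nash_equilibrium_def)
    with eps_equilibrium_masses[OF that] nash_masses show ?thesis
      unfolding profile_dist_def
      by (smt (verit) fst_conv snd_conv strat_dist_le_max_mass)
  qed
  with nash have "strong_approx_stable (n + 1) R C (\<Delta>^2) (4 * \<Delta>)"
    unfolding strong_approx_stable_def by blast
  with eps_equilibrium_masses show ?thesis
    by blast
qed

end
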